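(* Let $\mathcal J$ be a generalized almost complex structure on a Courant algebroid $E$ and $D$ a generalized connection with $D\mathcal J=0$. Then for all $u,v,w\in\Gamma(E)$, $$T^D(u,v,w)-T^D(\mathcal Ju,v,\mathcal Jw)-T^D(u,\mathcal Jv,\mathcal Jw)-T^D(\mathcal Ju,\mathcal Jv,w)=N_{\mathcal J}(u,v,w).$$ In particular, identifying $\Lambda^3E^*/\mathrm{im}\,\partial_{\mathcal J}$ with $\mathrm{im}\,\Pi_{\mathcal J}=\Lambda^3_{\mathcal J}E^*$, the intrinsic torsion of $\mathcal J$ equals $t_{\mathcal J}=\frac14N_{\mathcal J}$ (viewed as 3-forms on $E$).
   Context: A Courant algebroid on $M$ is a real vector bundle $E\to M$ with nondegenerate symmetric bilinear form $\langle\cdot,\cdot\rangle$, an $\mathbb R$-bilinear bracket $[\cdot,\cdot]$ on $\Gamma(E)$ and bundle map $\pi:E\to TM$ such that for $u,v,w\in\Gamma(E)$, $f\in C^\infty(M)$: $[u,[v,w]]=[[u,v],w]+[v,[u,w]]$; $\pi([u,v])=[\pi(u),\pi(v)]$; $[u,fv]=\pi(u)(f)v+f[u,v]$; $\pi(u)\langle v,w\rangle=\langle[u,v],w\rangle+\langle v,[u,w]\rangle$; $2\langle[u,u],v\rangle=\pi(v)\langle u,u\rangle$. A generalized connection is an $\mathbb R$-linear $D:\Gamma(E)\to\Gamma(E^*\otimes E)$ with $D_u(fv)=\pi(u)(f)v+fD_uv$ and $\pi(u)\langle v,w\rangle=\langle D_uv,w\rangle+\langle v,D_uw\rangle$; its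 torsion is $T^D(u,v)=D_uv-D_vu-[u,v]+(Du)^*v$ ($(Du)^*$ adjoint of $w\mapsto D_wu$), and $T^D(u,v,w)=\langle T^D(u,v),w\rangle$ (a 3-form). A generalized almost complex structure is a $\langle\cdot,\cdot\rangle$-orthogonal $\mathcal J$ with $\mathcal J^2=-\mathrm{Id}$; $N_{\mathcal J}(u,v)=[\mathcal Ju,\mathcal Jv]-[u,v]-\mathcal J([\mathcal Ju,v]+[u,\mathcal Jv])$ and $N_{\mathcal J}(u,v,w)=\langle N_{\mathcal J}(u,v),w\rangle$ (a 3-form). $\Lambda^{1,1}_{\mathcal J}E^*$ is the bundle of $\mathcal J$-invariant 2-forms; $\partial_{\mathcal J}:E^*\otimes\Lambda^{1,1}_{\mathcal J}E^*\to\Lambda^3E^*$, $(\partial_{\mathcal J}\eta)(u,v,w)=\eta(u,v,w)+\eta(w,u,v)+\eta(v,w,u)$. $\Pi_{\mathcal J}$ is the projector $(\Pi_{\mathcal J}\alpha)(u,v,w)=\frac14(\alpha(u,v,w)-\alpha(u,\mathcal Jv,\mathcal Jw)-\alpha(\mathcal Ju,v,\mathcal Jw)-\alpha(\mathcal Ju,\mathcal Jv,w))$ onto $\Lambda^3_{\mathcal J}E^*=\{\alpha:\alpha(\mathcal Ju,v,w)=\alpha(u,\mathcal Jv,w)=\alpha(u,v,\mathcal Jw)\}$, whose kernel is $\mathrm{im}\,\partial_{\mathcal J}$. The intrinsic torsion of $\mathcal J$ is the class of $T^D$ in $\Lambda^3E^*/\mathrm{im}\,\partial_{\mathcal J}$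 for any generalized connection $D$ with $D\mathcal J=0$; under the identification above it is $\Pi_{\mathcal J}(T^D)$. *)

theory Defs
  imports Main "HOL-Analysis.Analysis"
begin

text \<open>
  The type 'f plays the role of the
  real algebra of smooth functions C-infinity(M); the type 's plays the role of
  the space of sections Gamma(E), a module over 'f via sc.  ip is the
  (function-valued) pairing, br the bracket, and anc u is the vector field
  pi(u), acting as a derivation of 'f.
\<close>

definition is_derivation :: "('f::{comm_ring_1,real_algebra_1} \<Rightarrow> 'f) \<Rightarrow> bool" where
  "is_derivation X \<longleftrightarrow>
     (\<forall>f g. X (f + g) = X f + X g) \<and>
     (\<forall>c f. X (scaleR c f) = scaleR c (X f)) \<and>
     (\<forall>f g. X (f * g) = f * X g + g * X f)"

definition courant_algebroid ::
  "('f::{comm_ring_1,real_algebra_1} \<Rightarrow> 's::ab_group_add \<Rightarrow> 's) \<Rightarrow>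
   ('s \<Rightarrow> 's \<Rightarrow> 'f) \<Rightarrow> ('s \<Rightarrow> 's \<Rightarrow> 's) \<Rightarrow> ('s \<Rightarrow> 'f \<Rightarrow> 'f) \<Rightarrow> bool" where
  "courant_algebroid sc ip br anc \<longleftrightarrow>
     module sc \<and>
     \<comment> \<open>pairing: C-infinity-bilinear, symmetric, nondegenerate\<close>
     (\<forall>u v w. ip (u + v) w = ip u w + ip v w) \<and>
     (\<forall>f u v. ip (sc f u) v = f * ip u v) \<and>
     (\<forall>u v. ip u v = ip v u) \<and>
     (\<forall>u. (\<forall>v. ip u v = 0) \<longrightarrow> u = 0) \<and>
     \<comment> \<open>anchor: bundle map into vector fields (derivations)\<close>
     (\<forall>u v f. anc (u + v) f = anc u f + anc v f) \<and>
     (\<forall>g u f. anc (sc g u) f = g * anc u f) \<and>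
     (\<forall>u. is_derivation (anc u)) \<and>
     \<comment> \<open>bracket: R-bilinear\<close>
     (\<forall>u v w. br (u + v) w = br u w + br v w) \<and>
     (\<forall>u v w. br u (v + w) = br u v + br u w) \<and>
     (\<forall>c u v. br (sc (of_real c) u) v = sc (of_real c) (br u v)) \<and>
     (\<forall>c u v. br u (sc (of_real c) v) = sc (of_real c) (br u v)) \<and>
     \<comment> \<open>Courant algebroid axioms\<close>
     (\<forall>u v w. br u (br v w) = br (br u v) w + br v (br u w)) \<and>
     (\<forall>u v f. anc (br u v) f = anc u (anc v f) - anc v (anc u f)) \<and>
     (\<forall>u f v. br u (sc f v) = sc (anc u f) v + sc f (br u v)) \<and>
     (\<forall>u v w. anc u (ip v w) = ip (br u v) w + ip v (br u w)) \<and>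
     (\<forall>u v. 2 * ip (br u u) v = anc v (ip u u))"

text \<open>Generalized connection; D u v stands for D_u v.  Since
  D : Gamma(E) \<rightarrow> Gamma(E* \<otimes> E), D_u v is C-infinity-linear in u.\<close>
definition gen_connection ::
  "('f::{comm_ring_1,real_algebra_1} \<Rightarrow> 's::ab_group_add \<Rightarrow> 's) \<Rightarrow>
   ('s \<Rightarrow> 's \<Rightarrow> 'f) \<Rightarrow> ('s \<Rightarrow> 'f \<Rightarrow> 'f) \<Rightarrow> ('s \<Rightarrow> 's \<Rightarrow> 's) \<Rightarrow> bool" where
  "gen_connection sc ip anc D \<longleftrightarrow>
     (\<forall>u v w. D (u + v) w = D u w + D v w) \<and>
     (\<forall>f u v. D (sc f u) v = sc f (D u v)) \<and>
     (\<forall>u v w. D u (v + w) = D u v + D u w) \<and>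
     (\<forall>c u v. D u (sc (of_real c) v) = sc (of_real c) (D u v)) \<and>
     (\<forall>u f v. D u (sc f v) = sc (anc u f) v + sc f (D u v)) \<and>
     (\<forall>u v w. anc u (ip v w) = ip (D u v) w + ip v (D u w))"

text \<open>Torsion 3-form T^D(u,v,w) = < D_u v - D_v u - [u,v] + (Du)^* v, w >,
  where the adjoint (Du)^* of w \<mapsto> D_w u is characterized by
  < (Du)^* v, w > = < v, D_w u >.\<close>
definition torsion3 ::
  "('s::ab_group_add \<Rightarrow> 's \<Rightarrow> 'f::comm_ring_1) \<Rightarrow> ('s \<Rightarrow> 's \<Rightarrow> 's) \<Rightarrow> ('s \<Rightarrow> 's \<Rightarrow> 's)
   \<Rightarrow> 's \<Rightarrow> 's \<Rightarrow> 's \<Rightarrow> 'f" where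
  "torsion3 ip br D u v w = ip (D u v - D v u - br u v) w + ip v (D w u)"

definition gen_almost_complex ::
  "('f::comm_ring_1 \<Rightarrow> 's::ab_group_add \<Rightarrow> 's) \<Rightarrow> ('s \<Rightarrow> 's \<Rightarrow> 'f) \<Rightarrow> ('s \<Rightarrow> 's) \<Rightarrow> bool" where
  "gen_almost_complex sc ip J \<longleftrightarrow>
     (\<forall>u v. J (u + v) = J u + J v) \<and>
     (\<forall>f u. J (sc f u) = sc f (J u)) \<and>
     (\<forall>u v. ip (J u) (J v) = ip u v) \<and>
     (\<forall>u. J (J u) = - u)"

definition preserves :: "('s \<Rightarrow> 's \<Rightarrow> 's) \<Rightarrow> ('s \<Rightarrow> 's) \<Rightarrow> bool" where
  "preserves D J \<longleftrightarrow> (\<forall>u v. D u (J v) = J (D u v))"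

definition nijenhuis :: "('s::ab_group_add \<Rightarrow> 's \<Rightarrow> 's) \<Rightarrow> ('s \<Rightarrow> 's) \<Rightarrow> 's \<Rightarrow> 's \<Rightarrow> 's" where
  "nijenhuis br J u v = br (J u) (J v) - br u v - J (br (J u) v + br u (J v))"

definition nijenhuis3 ::
  "('s::ab_group_add \<Rightarrow> 's \<Rightarrow> 'f) \<Rightarrow> ('s \<Rightarrow> 's \<Rightarrow> 's) \<Rightarrow> ('s \<Rightarrow> 's) \<Rightarrow> 's \<Rightarrow> 's \<Rightarrow> 's \<Rightarrow> 'f" where
  "nijenhuis3 ip br J u v w = ip (nijenhuis br J u v) w"

definition Pi_J ::
  "('s \<Rightarrow> 's) \<Rightarrow> ('s \<Rightarrow> 's \<Rightarrow> 's \<Rightarrow> 'f::{comm_ring_1,real_algebra_1}) \<Rightarrow> 's \<Rightarrow> 's \<Rightarrow> 's \<Rightarrow> 'f" where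
  "Pi_J J \<alpha> u v w = scaleR (1/4)
     (\<alpha> u v w - \<alpha> u (J v) (J w) - \<alpha> (J u) v (J w) - \<alpha> (J u) (J v) w)"

end

theory Submission
  imports Defs
begin

text \<open>Expanding the four torsion terms, every term involving D pairs off and cancels, because
  D commutes with J and J is orthogonal (hence skew-adjoint); what survives is exactly the
  bracket part, which is the Nijenhuis tensor.  Applying the projector then gives one quarter
  of it.\<close>

locale symmetric_additive_pairing =
  fixes ip :: "'s::ab_group_add \<Rightarrow> 's \<Rightarrow> 'f::ab_group_add"
  assumes ip_add_left: "ip (a + b) c = ip a c + ip b c"
    and ip_sym: "ip a b = ip b a"
begin

lemma ip_zero_left: "ip 0 c = 0"
  using ip_add_left[of 0 0 c] by simp

lemma ip_minus_left: "ip (- a) c = - ip a c"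
  using ip_add_left[of a "- a" c] by (simp add: ip_zero_left add_eq_0_iff)

lemma ip_diff_left: "ip (a - b) c = ip a c - ip b c"
  unfolding diff_conv_add_uminus ip_add_left ip_minus_left ..

lemma ip_minus_right: "ip c (- a) = - ip c a"
  by (simp add: ip_sym[of c] ip_minus_left)

end

locale orthogonal_complex_structure = symmetric_additive_pairing ip
  for ip :: "'s::ab_group_add \<Rightarrow> 's \<Rightarrow> 'f::comm_ring_1" +
  fixes J :: "'s \<Rightarrow> 's"
  assumes J_add: "J (a + b) = J a + J b"
    and ip_J_J: "ip (J a) (J b) = ip a b"
    and J_J: "J (J a) = - a"
begin

lemma ip_J_left: "ip (J a) b = - ip a (J b)"
  using ip_J_J[of a "J b"] unfolding J_J ip_minus_right by (metis minus_minus)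

lemma torsion3_J_combination:
  assumes DJ: "\<And>a b. D a (J b) = J (D a b)"
  shows "torsion3 ip br D u v w - torsion3 ip br D (J u) v (J w)
           - torsion3 ip br D u (J v) (J w) - torsion3 ip br D (J u) (J v) w
         = nijenhuis3 ip br J u v w"
proof -
  have D_terms:
    "ip (D v (J u)) (J w) = ip (D v u) w"
    "ip (D u (J v)) (J w) = ip (D u v) w"
    "ip (J v) (D w (J u)) = ip v (D w u)"
    by (simp_all only: DJ ip_J_J)
  have D_terms_skew:
    "ip (D (J u) (J v)) w = - ip (D (J u) v) (J w)"
    "ip (D (J v) (J u)) w = - ip (D (J v) u) (J w)"
    by (simp_all only: DJ ip_J_left)
  have D_term_transposed: "ip v (D (J w) (J u)) = - ip (J v) (D (J w) u)"
    using ip_J_left[of "D (J w) u" v] by (simp add: DJ ip_sym)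
  have bracket_term: "ip (J (br (J u) v + br u (J v))) w
                      = - ip (br (J u) v) (J w) - ip (br u (J v)) (J w)"
    unfolding J_add ip_add_left ip_J_left diff_conv_add_uminus minus_add_distrib ..
  show ?thesis
    unfolding torsion3_def nijenhuis3_def nijenhuis_def ip_diff_left
      D_terms D_terms_skew D_term_transposed bracket_term
    by (simp add: algebra_simps)
qed

end

lemma courant_algebroid_pairing:
  assumes "courant_algebroid sc ip br anc"
  shows "symmetric_additive_pairing ip"
  using assms unfolding courant_algebroid_def
  by unfold_locales (elim conjE, blast)+

lemma gen_almost_complex_orthogonal:
  assumes "symmetric_additive_pairing ip" and "gen_almost_complex sc ip J"
  shows "orthogonal_complex_structure ip J"
  using assms by (simp add: gen_almost_complex_def orthogonal_complex_structure_def
    orthogonal_complex_structure_axioms_def)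

theorem corollary3p3:
  fixes sc :: "'f::{comm_ring_1,real_algebra_1} \<Rightarrow> 's::ab_group_add \<Rightarrow> 's"
    and ip :: "'s \<Rightarrow> 's \<Rightarrow> 'f"
    and br :: "'s \<Rightarrow> 's \<Rightarrow> 's"
    and anc :: "'s \<Rightarrow> 'f \<Rightarrow> 'f"
    and J :: "'s \<Rightarrow> 's"
    and D :: "'s \<Rightarrow> 's \<Rightarrow> 's"
  assumes "courant_algebroid sc ip br anc"
    and "gen_almost_complex sc ip J"
    and "gen_connection sc ip anc D"
    and "preserves D J"
  shows "(\<forall>u v w. torsion3 ip br D u v w - torsion3 ip br D (J u) v (J w)
                  - torsion3 ip br D u (J v) (J w) - torsion3 ip br D (J u) (J v) w
                  = nijenhuis3 ip br J u v w)
         \<and> (\<forall>u v w. Pi_J J (torsion3 ip br D) u v w = scaleR (1/4) (nijenhuis3 ip br J u v w))"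
proof -
  interpret orthogonal_complex_structure ip J
    using assms(1,2) by (intro gen_almost_complex_orthogonal courant_algebroid_pairing)
  have DJ: "\<And>a b. D a (J b) = J (D a b)"
    using assms(4) unfolding preserves_def by blast
  note combination = torsion3_J_combination[where D = D and br = br, OF DJ]
  have "Pi_J J (torsion3 ip br D) u v w = scaleR (1/4) (nijenhuis3 ip br J u v w)" for u v w
    unfolding Pi_J_def combination[symmetric] by (simp add: algebra_simps)
  with combination show ?thesis
    by blast
qed

end
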